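(* Let $a$ be a nonzero element of $\mathbb Z_g$, and let $i$ be an integer with $1\le i\le k$. If $\vec \theta \in \Lambda$, then \[ \sum_{1 \leq m < i} \theta_{\{m,i\},-a} + \sum_{i < m \leq k} \theta_{\{i,m\},a} \equiv 0 \pmod{2 \pi},\] where an empty sum is $0$.
   Context: Let $g\ge 2$, $k\ge 2$ be integers, $\mathbb Z_g$ the integers mod $g$, and $d=\binom{k}{2}(g-1)$. Index the coordinates of $\mathbb R^d$ by pairs $(\{i,j\},a)$ with $1\le i<j\le k$ and $a\in\mathbb Z_g\setminus\{0\}$. Define $Z:(\mathbb Z_g)^k\to\mathbb R^d$ by $[Z(\vec x)]_{\{i,j\},a}=1-1/g$ if $x_i-x_j=a$ and $-1/g$ otherwise. Define $\Phi(\vec\theta)=\sum_{\vec x\in(\mathbb Z_g)^k} g^{-k}e^{i\vec\theta\cdot Z(\vec x)}$ for $\vec\theta\in\mathbb R^d$, and $\Lambda=\{\vec\theta\in\mathbb R^d: |\Phi(\vec\theta)|=1\}$. *)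

theory Defs
  imports "HOL-Analysis.Analysis"
begin

text \<open>Elements of Z_g are represented by integers in {0..<g}; the coordinate
  ({i,j},a) of R^d (1 \<le> i < j \<le> k, a \<in> Z_g nonzero) is represented by the
  triple (i, j, a) with a \<in> {1..<g}.  Vectors theta in R^d are functions on
  these triples (values at other triples are irrelevant).\<close>

definition coord_index :: "nat \<Rightarrow> nat \<Rightarrow> (nat \<times> nat \<times> int) set" where
  "coord_index g k = {(i, j, a). 1 \<le> i \<and> i < j \<and> j \<le> k \<and> 1 \<le> a \<and> a < int g}"

definition Zg_vectors :: "nat \<Rightarrow> nat \<Rightarrow> (nat \<Rightarrow> int) set" where
  "Zg_vectors g k = PiE {1..k} (\<lambda>_. {0..<int g})"

definition Zvec :: "nat \<Rightarrow> (nat \<Rightarrow> int) \<Rightarrow> nat \<times> nat \<times> int \<Rightarrow> real" where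
  "Zvec g x = (\<lambda>(i, j, a). if (x i - x j) mod int g = a then 1 - 1 / real g else - 1 / real g)"

definition Phi :: "nat \<Rightarrow> nat \<Rightarrow> (nat \<times> nat \<times> int \<Rightarrow> real) \<Rightarrow> complex" where
  "Phi g k \<theta> = (\<Sum>x\<in>Zg_vectors g k. (1 / of_nat g ^ k) *
      exp (\<i> * of_real (\<Sum>c\<in>coord_index g k. \<theta> c * Zvec g x c)))"

definition Lambda_set :: "nat \<Rightarrow> nat \<Rightarrow> (nat \<times> nat \<times> int \<Rightarrow> real) set" where
  "Lambda_set g k = {\<theta>. cmod (Phi g k \<theta>) = 1}"

end

theory Submission
  imports Defs
begin

text \<open>\<open>\<Phi>(\<theta>)\<close> is the mean of the unit complex numbers \<open>e^{i\<theta>\<cdot>Z(x)}\<close>; by the equality case of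
  the triangle inequality, \<open>|\<Phi>(\<theta>)| = 1\<close> forces all of them to coincide, so \<open>\<theta>\<cdot>Z(x) - \<theta>\<cdot>Z(y)\<close>
  lies in \<open>2\<pi>\<int>\<close> for all \<open>x, y\<close>.  Writing \<open>Z(x)\<close> as the indicator of the coordinates
  \<open>({p,q},b)\<close> with \<open>x\<^sub>p - x\<^sub>q = b\<close> minus the constant \<open>1/g\<close>, comparing \<open>x = 0\<close> with
  \<open>x = a e\<^sub>i\<close> leaves exactly the coordinates \<open>({m,i},-a)\<close> for \<open>m < i\<close> and \<open>({i,m},a)\<close> for \<open>m > i\<close>.\<close>

lemma eq_mean_if_norm_mean_eq_1:
  fixes z :: "'a \<Rightarrow> 'b::real_inner"
  assumes "finite S" and "x \<in> S"
    and unit: "\<And>y. y \<in> S \<Longrightarrow> norm (z y) = 1"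
    and mean: "norm (sum z S /\<^sub>R real (card S)) = 1"
  shows "z x = sum z S /\<^sub>R real (card S)"
proof -
  define w where "w = sum z S /\<^sub>R real (card S)"
  have norm_w: "norm w = 1"
    using mean by (simp add: w_def)
  then have w: "inner w w = 1"
    by (simp flip: power2_norm_eq_inner)
  have "card S > 0" using assms(1,2) card_gt_0_iff by blast
  then have "sum z S = real (card S) *\<^sub>R w" by (simp add: w_def)
  then have "(\<Sum>y\<in>S. inner w (z y)) = real (card S)"
    using w by (simp flip: inner_sum_right)
  then have "(\<Sum>y\<in>S. 1 - inner w (z y)) = 0"
    by (simp add: sum_subtractf)
  moreover have nonneg: "0 \<le> 1 - inner w (z y)" if "y \<in> S" for y
    using norm_cauchy_schwarz[of w "z y"] unfolding norm_w unit[OF that] by simp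
  ultimately have "inner w (z x) = 1"
    using sum_nonneg_eq_0_iff[OF assms(1) nonneg] assms(2) by simp
  moreover have "inner (z x) (z x) = 1"
    using unit[OF assms(2)] by (simp flip: power2_norm_eq_inner)
  ultimately have "inner (z x - w) (z x - w) = 0"
    using w by (simp add: inner_diff_left inner_diff_right inner_commute)
  then show ?thesis by (simp add: w_def)
qed

definition Zphase :: "nat \<Rightarrow> nat \<Rightarrow> (nat \<times> nat \<times> int \<Rightarrow> real) \<Rightarrow> (nat \<Rightarrow> int) \<Rightarrow> real" where
  "Zphase g k \<theta> x = (\<Sum>c\<in>coord_index g k. \<theta> c * Zvec g x c)"

lemma finite_coord_index: "finite (coord_index g k)"
proof (rule finite_subset)
  show "coord_index g k \<subseteq> {1..k} \<times> {1..k} \<times> {1..<int g}"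
    by (auto simp: coord_index_def)
qed auto

lemma finite_Zg_vectors: "finite (Zg_vectors g k)"
  by (simp add: Zg_vectors_def finite_PiE)

lemma card_Zg_vectors: "card (Zg_vectors g k) = g ^ k"
  by (simp add: Zg_vectors_def card_PiE)

lemma Phi_eq_mean:
  "Phi g k \<theta> = (\<Sum>x\<in>Zg_vectors g k. exp (\<i> * of_real (Zphase g k \<theta> x)))
                  /\<^sub>R real (card (Zg_vectors g k))"
  by (simp add: Phi_def Zphase_def card_Zg_vectors scaleR_conv_of_real sum_distrib_left
      divide_inverse mult.commute)

lemma Zphase_diff_in_Lambda_set:
  assumes "\<theta> \<in> Lambda_set g k" and "x \<in> Zg_vectors g k" and "y \<in> Zg_vectors g k"
  obtains n :: int where "Zphase g k \<theta> y - Zphase g k \<theta> x = 2 * pi * of_int n"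
proof -
  have "exp (\<i> * of_real (Zphase g k \<theta> v)) = Phi g k \<theta>" if "v \<in> Zg_vectors g k" for v
    unfolding Phi_eq_mean
    by (rule eq_mean_if_norm_mean_eq_1)
      (use assms(1) that in \<open>simp_all add: finite_Zg_vectors Lambda_set_def norm_exp_i_times
         flip: Phi_eq_mean\<close>)
  then have "exp (\<i> * of_real (Zphase g k \<theta> y)) = exp (\<i> * of_real (Zphase g k \<theta> x))"
    using assms(2,3) by simp
  then obtain n :: int where
    "\<i> * of_real (Zphase g k \<theta> y) = \<i> * of_real (Zphase g k \<theta> x) + of_int (2 * n) * pi * \<i>"
    using exp_eq by blast
  then have "Zphase g k \<theta> y - Zphase g k \<theta> x = 2 * pi * of_int n"
    by (simp add: complex_eq_iff)
  then show thesis by (rule that)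
qed

definition difference_coords :: "nat \<Rightarrow> nat \<Rightarrow> (nat \<Rightarrow> int) \<Rightarrow> (nat \<times> nat \<times> int) set" where
  "difference_coords g k x = {(p, q, b) \<in> coord_index g k. (x p - x q) mod int g = b}"

lemma Zphase_eq:
  "Zphase g k \<theta> x = sum \<theta> (difference_coords g k x) - sum \<theta> (coord_index g k) / real g"
proof -
  have "Zphase g k \<theta> x
      = (\<Sum>c\<in>coord_index g k. (if c \<in> difference_coords g k x then \<theta> c else 0) - \<theta> c / real g)"
    unfolding Zphase_def
    by (rule sum.cong) (auto simp: Zvec_def difference_coords_def algebra_simps split: if_splits)
  also have "\<dots> = sum \<theta> (coord_index g k \<inter> difference_coords g k x) - sum \<theta> (coord_index g k) / real g"
    by (simp add: sum_subtractf sum_divide_distrib sum.inter_restrict[OF finite_coord_index])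
  also have "coord_index g k \<inter> difference_coords g k x = difference_coords g k x"
    by (auto simp: difference_coords_def)
  finally show ?thesis .
qed

lemma difference_coords_zero: "difference_coords g k (restrict (\<lambda>_. 0) {1..k}) = {}"
  by (auto simp: difference_coords_def coord_index_def)

lemma difference_coords_single:
  assumes "1 \<le> a" and "a < int g" and "1 \<le> i" and "i \<le> k"
  shows "difference_coords g k (restrict (\<lambda>j. if j = i then a else 0) {1..k})
       = (\<lambda>m. (m, i, (- a) mod int g)) ` {1..<i} \<union> (\<lambda>m. (i, m, a)) ` {i<..k}"
proof -
  have "a mod int g = a" and "(- a) mod int g = int g - a"
    using assms(1,2) by (simp_all add: zmod_zminus1_eq_if)
  then show ?thesis
    using assms by (auto simp: difference_coords_def coord_index_def)
qed

theorem lemma2p5: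
  fixes g k i :: nat and a :: int and \<theta> :: "nat \<times> nat \<times> int \<Rightarrow> real"
  assumes "g \<ge> 2" and "k \<ge> 2"
    and "1 \<le> a" and "a < int g"
    and "1 \<le> i" and "i \<le> k"
    and "\<theta> \<in> Lambda_set g k"
  shows "\<exists>n::int. (\<Sum>m\<in>{1..<i}. \<theta> (m, i, (- a) mod int g))
                  + (\<Sum>m\<in>{i<..k}. \<theta> (i, m, a)) = 2 * pi * of_int n"
proof -
  define x where "x = restrict (\<lambda>_. 0 :: int) {1..k}"
  define y where "y = restrict (\<lambda>j. if j = i then a else 0) {1..k}"
  have "x \<in> Zg_vectors g k" and "y \<in> Zg_vectors g k"
    using assms(1,3,4) by (auto simp: Zg_vectors_def x_def y_def)
  then obtain n :: int where n: "Zphase g k \<theta> y - Zphase g k \<theta> x = 2 * pi * of_int n"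
    using Zphase_diff_in_Lambda_set[OF assms(7)] by blast
  have "Zphase g k \<theta> y - Zphase g k \<theta> x
      = sum \<theta> (difference_coords g k y) - sum \<theta> (difference_coords g k x)"
    by (simp add: Zphase_eq)
  also have "\<dots> = sum \<theta> ((\<lambda>m. (m, i, (- a) mod int g)) ` {1..<i} \<union> (\<lambda>m. (i, m, a)) ` {i<..k})"
    unfolding x_def y_def difference_coords_zero difference_coords_single[OF assms(3-6)] by simp
  also have "\<dots> = (\<Sum>m\<in>{1..<i}. \<theta> (m, i, (- a) mod int g)) + (\<Sum>m\<in>{i<..k}. \<theta> (i, m, a))"
    by (subst sum.union_disjoint) (auto simp: sum.reindex inj_on_def)
  finally show ?thesis
    using n by metis
qed

end
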